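(* Let $(\eta_k)_{k\in\mathbb N}$ be i.i.d. real random variables with $\mathbb{E}\eta_1=0$ and $\mathbb{E}\eta_1^2=1$, and let $\alpha>-1/2$. Then for every $\rho>0$, $$\lim_{s\to0+}f_\alpha(s)\sum_{k\ge M(s)+1}\frac{(\log k)^\alpha}{k^{1/2+s}}|\eta_k|\,\mathbf{1}_{\mathcal{A}_{k,\rho}(s)}=0\quad\text{a.s.}$$ and $$\lim_{s\to0+}f_\alpha(s)\sum_{k\ge M(s)+1}\frac{(\log k)^\alpha}{k^{1/2+s}}\mathbb{E}\big(|\eta_k|\,\mathbf{1}_{\mathcal{A}_{k,\rho}(s)}\big)=0.$$
   Context: $M(s)=\lfloor 1/s\rfloor$ for $s>0$; $c_\alpha=\Gamma(1+2\alpha)/2^{2\alpha}$; $f_\alpha(s)=\big(s^{1+2\alpha}/(c_\alpha\log\log(1/s))\big)^{1/2}$ for $s\in(0,1/e)$. For $k\in\mathbb N$, $\rho>0$, $s\in(0,1/e)$, $\mathcal{A}_{k,\rho}(s)$ is the event $$\Big\{|\eta_k|>\frac{\rho}{(\log k)^\alpha\log(1/s)}\Big(\frac{k^{1+s}}{s^{1+2\alpha}\log\log(1/s)}\Big)^{1/2}\Big\}.$$ *)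

theory Defs
  imports "HOL-Probability.Probability"
begin

definition Mfun :: "real \<Rightarrow> nat" where
  "Mfun s = nat \<lfloor>1 / s\<rfloor>"

definition c_alpha :: "real \<Rightarrow> real" where
  "c_alpha \<alpha> = Gamma (1 + 2 * \<alpha>) / 2 powr (2 * \<alpha>)"

definition f_alpha :: "real \<Rightarrow> real \<Rightarrow> real" where
  "f_alpha \<alpha> s = sqrt (s powr (1 + 2 * \<alpha>) / (c_alpha \<alpha> * ln (ln (1 / s))))"

text \<open>The event A_{k,rho}(s), as a predicate on the value of eta_k.\<close>
definition A_event :: "real \<Rightarrow> nat \<Rightarrow> real \<Rightarrow> real \<Rightarrow> real \<Rightarrow> bool" where
  "A_event \<alpha> k \<rho> s x \<longleftrightarrow>
     \<bar>x\<bar> > \<rho> / ((ln (real k)) powr \<alpha> * ln (1 / s)) *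
            sqrt (real k powr (1 + s) / (s powr (1 + 2 * \<alpha>) * ln (ln (1 / s))))"

definition wgt :: "real \<Rightarrow> real \<Rightarrow> nat \<Rightarrow> real" where
  "wgt \<alpha> s k = (ln (real k)) powr \<alpha> / real k powr (1/2 + s)"

end

theory Submission
  imports Defs "HOL-Real_Asymp.Real_Asymp"
begin

text \<open>
  For small s the threshold defining the event A(k,\<rho>,s) exceeds sqrt k for every k > M(s): the
  factor (log k)^\<alpha> is absorbed by k^(s/2), and what remains, a constant times
  log(1/s) sqrt(s^(1+2\<alpha>) log log(1/s)), tends to 0. So the event forces \<eta>_k^2 > k.

  Almost surely: \<Sum>_k P(\<eta>_1^2 > k) \<le> E \<eta>_1^2 < \<infinity>, so by Borel--Cantelli \<eta>_k^2 \<le> k for all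
  large k, and once s is small every term of the random series vanishes.

  In mean: the weights are at most C(s)/sqrt k, where C(s) = (\<alpha>/s)^\<alpha> for \<alpha> > 0 and 1
  otherwise, and \<Sum>_k E(|\<eta>_1| 1{\<eta>_1^2 > k})/sqrt k \<le> 2 E \<eta>_1^2 because
  \<Sum>_{k < x^2} 1/sqrt k \<le> 2|x|. The series is therefore at most 2 C(s), and f_\<alpha>(s) C(s) \<rightarrow> 0.
\<close>

definition ln_powr_const :: "real \<Rightarrow> real \<Rightarrow> real" where
  "ln_powr_const a t = (if a > 0 then (a / t) powr a else 1)"

lemma ln_powr_const_nonneg: "0 \<le> ln_powr_const a t"
  by (simp add: ln_powr_const_def)

lemma ln_powr_le_powr:
  fixes a t x :: real
  assumes "a > 0" "t > 0" "x \<ge> 1"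
  shows "ln x powr a \<le> (a / t) powr a * x powr t"
proof -
  have "(t / a) * ln x = ln (x powr (t / a))"
    using assms by (simp add: ln_powr)
  also have "\<dots> \<le> x powr (t / a)"
    using assms by (smt (verit) ln_le_minus_one powr_gt_zero)
  finally have "ln x \<le> (a / t) * x powr (t / a)"
    using assms by (simp add: field_simps)
  then have "ln x powr a \<le> ((a / t) * x powr (t / a)) powr a"
    using assms by (intro powr_mono2) auto
  also have "\<dots> = (a / t) powr a * x powr t"
    unfolding powr_mult using assms by (simp add: powr_powr)
  finally show ?thesis .
qed

lemma ln_powr_le_const_powr:
  fixes a t x :: real
  assumes "t > 0" "exp 1 \<le> x"
  shows "ln x powr a \<le> ln_powr_const a t * x powr t"
proof -
  have x: "x \<ge> 1"
    using assms(2) by (smt (verit) one_le_exp_iff)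
  then have lnx: "ln x \<ge> 1"
    using assms(2) ln_ge_iff[of x 1] by simp
  show ?thesis
  proof (cases "a > 0")
    case True
    then show ?thesis
      using ln_powr_le_powr[OF True assms(1) x(1)] by (simp add: ln_powr_const_def)
  next
    case False
    have "ln x powr a \<le> ln x powr 0"
      using False lnx by (intro powr_mono) auto
    also have "\<dots> \<le> x powr t"
      using x lnx assms(1) by (simp add: ge_one_powr_ge_zero)
    finally show ?thesis
      using False by (simp add: ln_powr_const_def)
  qed
qed

lemma wgt_nonneg: "0 \<le> wgt a s k"
  by (simp add: wgt_def)

lemma wgt_le:
  assumes "s > 0" "k \<ge> 3"
  shows "wgt a s k \<le> ln_powr_const a s / sqrt (real k)"
proof -
  have k: "exp 1 \<le> real k"
    using exp_le assms(2) by linarith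
  have pos: "0 < real k powr s" "0 < sqrt (real k)"
    using assms by auto
  have "wgt a s k = ln (real k) powr a / (real k powr s * sqrt (real k))"
    by (simp add: wgt_def powr_add powr_half_sqrt mult.commute)
  also have "\<dots> \<le> ln_powr_const a s * real k powr s / (real k powr s * sqrt (real k))"
    using ln_powr_le_const_powr[OF assms(1) k, of a] pos by (intro divide_right_mono) auto
  also have "\<dots> = ln_powr_const a s / sqrt (real k)"
    using pos by simp
  finally show ?thesis .
qed

lemma A_event_imp_sq_gt:
  assumes s: "0 < s" "s < 1" "0 < ln (ln (1/s))" and k: "k \<ge> 3"
    and small: "ln_powr_const a (s/2) * ln (1/s) * sqrt (s powr (1 + 2*a) * ln (ln (1/s))) \<le> \<rho>"
    and A: "A_event a k \<rho> s x"
  shows "real k < x\<^sup>2"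
proof -
  define P L Q E where "P = ln (real k) powr a" and "L = ln (1/s)"
    and "Q = sqrt (s powr (1 + 2*a) * ln (ln (1/s)))" and "E = real k powr (s/2)"
  have "exp 1 \<le> real k"
    using exp_le k by linarith
  then have P: "P \<le> ln_powr_const a (s/2) * E"
    unfolding P_def E_def using s by (intro ln_powr_le_const_powr) auto
  have "1 < real k"
    using k by simp
  then have pos: "0 < P" "0 < L" "0 < Q" "1 \<le> E"
    using s by (auto simp: P_def L_def Q_def E_def ge_one_powr_ge_zero)
  (* The threshold of A_event is \<rho> sqrt k E / (P L Q), and P \<le> C E with
     C = ln_powr_const a (s/2), so it is at least sqrt k once C L Q \<le> \<rho>. *)
  have threshold: "\<rho> / (P * L) * (sqrt (real k) * E / Q)
      = \<rho> / (P * L) * sqrt (real k powr (1 + s) / (s powr (1 + 2*a) * ln (ln (1/s))))"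
    using powr_half_sqrt_powr[of "real k" s] pos
    by (simp add: Q_def E_def powr_add real_sqrt_divide real_sqrt_mult)
  have "P * L * Q \<le> E * (ln_powr_const a (s/2) * L * Q)"
    using P pos by (simp add: mult_right_mono mult_ac)
  also have "\<dots> \<le> E * \<rho>"
    using small pos by (intro mult_left_mono) (auto simp: L_def Q_def)
  finally have "P * L * Q \<le> E * \<rho>" .
  then have "sqrt (real k) * (P * L * Q) \<le> sqrt (real k) * (E * \<rho>)"
    by (rule mult_left_mono) simp
  then have "sqrt (real k) * (P * L * Q) \<le> \<rho> * (sqrt (real k) * E)"
    by (simp only: ac_simps)
  then have "sqrt (real k) \<le> \<rho> / (P * L) * (sqrt (real k) * E / Q)"
    using pos by (simp add: divide_simps mult_ac)
  also have "\<dots> = \<rho> / (P * L) * sqrt (real k powr (1 + s) / (s powr (1 + 2*a) * ln (ln (1/s))))"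
    by (rule threshold)
  also have "\<dots> < \<bar>x\<bar>"
    using A by (simp only: A_event_def P_def L_def)
  finally show ?thesis
    using real_sqrt_less_iff[of "real k" "x\<^sup>2"] by simp
qed

lemma eventually_ln_ln_pos: "\<forall>\<^sub>F s in at_right 0. 0 < ln (ln (1 / s :: real))"
proof -
  have "filterlim (\<lambda>s::real. ln (ln (1 / s))) at_top (at_right 0)"
    by real_asymp
  then show ?thesis
    by (simp add: filterlim_at_top_dense)
qed

lemma eventually_Mfun_ge: "\<forall>\<^sub>F s in at_right 0. N \<le> Mfun s"
proof -
  have "\<forall>\<^sub>F s in at_right 0. s < 1 / (real N + 1)"
    by (rule order_tendstoD(2)[OF tendsto_ident_at]) simp
  then show ?thesis
    using eventually_at_right_less[of "0::real"]
  proof (eventually_elim)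
    case (elim s)
    then have "real N + 1 < 1 / s"
      by (simp add: field_simps)
    then show ?case
      unfolding Mfun_def by linarith
  qed
qed

lemma divide_powr_mult_sqrt_powr:
  fixes s b a X :: real
  assumes "s > 0" "b > 0" "X \<ge> 0"
  shows "(b / s) powr a * sqrt (s powr (1 + 2*a) * X) = b powr a * sqrt (s * X)"
proof -
  have "(b / s) powr a * sqrt (s powr (1 + 2*a) * X)
      = b powr a * (s powr (- a) * s powr ((1 + 2*a) / 2)) * sqrt X"
    using assms powr_half_sqrt_powr[of s "1 + 2*a"]
    by (simp add: real_sqrt_mult powr_divide powr_minus_divide)
  also have "s powr (- a) * s powr ((1 + 2*a) / 2) = sqrt s"
    using assms by (simp add: powr_add[symmetric] powr_half_sqrt add_divide_distrib)
  finally show ?thesis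
    by (simp add: real_sqrt_mult)
qed

(* For a > 0 the constant (a/(c s))^a cancels the surplus factor s^a of sqrt (s^(1+2a)),
   leaving sqrt s; for a \<le> 0 the exponent 1 + 2a is already positive. *)
lemma tendsto_ln_powr_const_mult_zero:
  fixes g X :: "real \<Rightarrow> real"
  assumes "a > -1/2" "c > 0"
    and lim: "\<And>e. e > 0 \<Longrightarrow> ((\<lambda>s. g s * sqrt (s powr e * X s)) \<longlongrightarrow> 0) (at_right 0)"
    and X: "\<forall>\<^sub>F s in at_right 0. 0 \<le> X s"
  shows "((\<lambda>s. ln_powr_const a (c * s) * g s * sqrt (s powr (1 + 2*a) * X s)) \<longlongrightarrow> 0) (at_right 0)"
proof (cases "a > 0")
  case True
  have "((\<lambda>s. (a / c) powr a * (g s * sqrt (s powr 1 * X s))) \<longlongrightarrow> (a / c) powr a * 0) (at_right 0)"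
    by (intro tendsto_mult_left lim) simp
  moreover have "\<forall>\<^sub>F s in at_right 0. (a / c) powr a * (g s * sqrt (s powr 1 * X s))
      = ln_powr_const a (c * s) * g s * sqrt (s powr (1 + 2*a) * X s)"
    using X eventually_at_right_less[of "0::real"]
  proof (eventually_elim)
    case (elim s)
    have "ln_powr_const a (c * s) * sqrt (s powr (1 + 2*a) * X s) = (a / c) powr a * sqrt (s * X s)"
      using True elim assms(2) divide_powr_mult_sqrt_powr[of s "a / c" "X s" a]
      by (simp add: ln_powr_const_def)
    with elim show ?case
      by (simp add: mult_ac)
  qed
  ultimately show ?thesis
    by (simp add: Lim_transform_eventually)
next
  case False
  then show ?thesis
    using lim[of "1 + 2*a"] assms(1) by (simp add: ln_powr_const_def)
qed

lemma tendsto_threshold_zero: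
  assumes "a > -1/2"
  shows "((\<lambda>s. ln_powr_const a (s/2) * ln (1/s) * sqrt (s powr (1 + 2*a) * ln (ln (1/s))))
           \<longlongrightarrow> 0) (at_right 0)"
proof -
  have "((\<lambda>s. ln (1/s) * sqrt (s powr e * ln (ln (1/s)))) \<longlongrightarrow> 0) (at_right 0)" if "e > 0" for e :: real
    using that by real_asymp
  then have "((\<lambda>s. ln_powr_const a (1/2 * s) * ln (1/s) * sqrt (s powr (1 + 2*a) * ln (ln (1/s))))
      \<longlongrightarrow> 0) (at_right 0)"
    using eventually_ln_ln_pos
    by (intro tendsto_ln_powr_const_mult_zero[OF assms]) (auto elim: eventually_mono)
  then show ?thesis
    by simp
qed

lemma tendsto_f_alpha_mult_zero:
  assumes "a > -1/2"
  shows "((\<lambda>s. f_alpha a s * ln_powr_const a s) \<longlongrightarrow> 0) (at_right 0)"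
proof -
  have c: "c_alpha a > 0"
    using assms by (simp add: c_alpha_def)
  have "((\<lambda>s. 1 * sqrt (s powr e * (1 / (c_alpha a * ln (ln (1/s)))))) \<longlongrightarrow> 0) (at_right 0)"
    if "e > 0" for e :: real
    using that c by real_asymp
  then have "((\<lambda>s. ln_powr_const a (1 * s) * 1 * sqrt (s powr (1 + 2*a) * (1 / (c_alpha a * ln (ln (1/s))))))
      \<longlongrightarrow> 0) (at_right 0)"
    using c eventually_ln_ln_pos
    by (intro tendsto_ln_powr_const_mult_zero[OF assms]) (auto elim: eventually_mono)
  then show ?thesis
    by (simp add: f_alpha_def mult.commute)
qed

lemma eventually_f_alpha_nonneg:
  assumes "a > -1/2"
  shows "\<forall>\<^sub>F s in at_right 0. 0 \<le> f_alpha a s"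
  using eventually_at_right_less[of "0::real"] eventually_ln_ln_pos
  by eventually_elim (use assms in \<open>simp add: f_alpha_def c_alpha_def\<close>)

lemma eventually_A_event_imp_sq_gt:
  assumes "a > -1/2" "\<rho> > 0"
  shows "\<forall>\<^sub>F s in at_right 0. \<forall>k > Mfun s. \<forall>x. A_event a k \<rho> s x \<longrightarrow> real k < x\<^sup>2"
proof -
  have "\<forall>\<^sub>F s in at_right 0. s < (1::real)"
    by (rule order_tendstoD(2)[OF tendsto_ident_at]) simp
  moreover have "\<forall>\<^sub>F s in at_right 0.
      ln_powr_const a (s/2) * ln (1/s) * sqrt (s powr (1 + 2*a) * ln (ln (1/s))) \<le> \<rho>"
    using order_tendstoD(2)[OF tendsto_threshold_zero[OF assms(1)] assms(2)]
    by (auto elim: eventually_mono)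
  ultimately show ?thesis
    using eventually_at_right_less[of "0::real"] eventually_ln_ln_pos eventually_Mfun_ge[of 2]
    by eventually_elim (auto intro: A_event_imp_sq_gt)
qed

lemma summable_mult_suminf_tendsto_zero:
  fixes u :: "'b \<Rightarrow> nat \<Rightarrow> real"
  assumes "\<forall>\<^sub>F s in F. (\<forall>n. 0 \<le> u s n) \<and> (\<forall>N. (\<Sum>n<N. u s n) \<le> B s) \<and> 0 \<le> f s"
    and "((\<lambda>s. f s * B s) \<longlongrightarrow> 0) F"
  shows "(\<forall>\<^sub>F s in F. summable (u s)) \<and> ((\<lambda>s. f s * suminf (u s)) \<longlongrightarrow> 0) F"
proof -
  have bounds: "\<forall>\<^sub>F s in F. summable (u s) \<and> 0 \<le> f s * suminf (u s) \<and> f s * suminf (u s) \<le> f s * B s"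
    using assms(1)
  proof eventually_elim
    case (elim s)
    then have "summable (u s)"
      by (intro summableI_nonneg_bounded) auto
    with elim show ?case
      by (auto intro!: mult_left_mono mult_nonneg_nonneg suminf_le_const suminf_nonneg)
  qed
  have "((\<lambda>s. f s * suminf (u s)) \<longlongrightarrow> 0) F"
    by (rule tendsto_sandwich[OF _ _ tendsto_const assms(2)]) (use bounds in \<open>auto elim: eventually_mono\<close>)
  with bounds show ?thesis
    by (auto elim: eventually_mono)
qed

lemma eventually_no_A_event:
  assumes "a > -1/2" "\<rho> > 0" and x: "\<forall>\<^sub>F k in sequentially. (x k)\<^sup>2 \<le> real k"
  shows "\<forall>\<^sub>F s in at_right 0. \<forall>k > Mfun s. \<not> A_event a k \<rho> s (x k)"
proof -
  obtain N where N: "\<And>k. N \<le> k \<Longrightarrow> (x k)\<^sup>2 \<le> real k"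
    using x by (auto simp: eventually_sequentially)
  show ?thesis
    using eventually_A_event_imp_sq_gt[OF assms(1,2)] eventually_Mfun_ge[of N]
  proof eventually_elim
    case (elim s)
    show ?case
    proof (intro allI impI notI)
      fix k assume "Mfun s < k" "A_event a k \<rho> s (x k)"
      with elim have "real k < (x k)\<^sup>2"
        by blast
      moreover have "(x k)\<^sup>2 \<le> real k"
        using N \<open>Mfun s < k\<close> elim(2) by simp
      ultimately show False
        by simp
    qed
  qed
qed

lemma tail_sum_tendsto_zero_if_sq_le:
  assumes "a > -1/2" "\<rho> > 0" and "\<forall>\<^sub>F k in sequentially. (x k)\<^sup>2 \<le> real k"
  shows "(\<forall>\<^sub>F s in at_right 0. summable (\<lambda>n. let k = n + Mfun s + 1 in
            wgt a s k * \<bar>x k\<bar> * (if A_event a k \<rho> s (x k) then 1 else 0)))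
       \<and> ((\<lambda>s. f_alpha a s * (\<Sum>n. let k = n + Mfun s + 1 in
            wgt a s k * \<bar>x k\<bar> * (if A_event a k \<rho> s (x k) then 1 else 0))) \<longlongrightarrow> 0) (at_right 0)"
  using eventually_no_A_event[OF assms] eventually_f_alpha_nonneg[OF assms(1)]
  by (intro summable_mult_suminf_tendsto_zero[where B = "\<lambda>_. 0"])
    (auto elim: eventually_mono[OF eventually_conj] simp: Let_def)

lemma sum_inverse_sqrt_le: "(\<Sum>k=1..n. 1 / sqrt (real k)) \<le> 2 * sqrt (real n)"
proof (induction n)
  case 0
  show ?case by simp
next
  case (Suc n)
  have "2 * (sqrt (real n) * sqrt (real (Suc n))) \<le> (sqrt (real n))\<^sup>2 + (sqrt (real (Suc n)))\<^sup>2"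
    using sum_squares_bound[of "sqrt (real n)" "sqrt (real (Suc n))"] by (simp add: mult_ac)
  then have "2 * sqrt (real n) + 1 / sqrt (real (Suc n)) \<le> 2 * sqrt (real (Suc n))"
    by (simp add: field_simps)
  with Suc show ?case
    by simp
qed

lemma sum_inverse_sqrt_less_le:
  assumes "K \<subseteq> {k. 0 < k \<and> real k < y}" "0 \<le> y"
  shows "(\<Sum>k\<in>K. 1 / sqrt (real k)) \<le> 2 * sqrt y"
proof -
  define n where "n = nat \<lceil>y\<rceil> - 1"
  have "K \<subseteq> {1..n}"
  proof
    fix k assume "k \<in> K"
    then have "0 < k" "int k < \<lceil>y\<rceil>"
      using assms(1) by (auto simp: less_ceiling_iff)
    then show "k \<in> {1..n}"
      by (auto simp: n_def)
  qed
  then have "(\<Sum>k\<in>K. 1 / sqrt (real k)) \<le> (\<Sum>k=1..n. 1 / sqrt (real k))"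
    by (intro sum_mono2) auto
  also have "\<dots> \<le> 2 * sqrt (real n)"
    by (rule sum_inverse_sqrt_le)
  also have "real n \<le> y"
    using assms(2) by (simp add: n_def) linarith
  finally show ?thesis
    by simp
qed

lemma sum_truncated_abs_le:
  fixes x :: real
  assumes "finite K" "0 \<notin> K"
  shows "(\<Sum>k\<in>K. \<bar>x\<bar> * (if real k < x\<^sup>2 then 1 else 0) / sqrt (real k)) \<le> 2 * x\<^sup>2"
proof -
  have "(\<Sum>k\<in>K. \<bar>x\<bar> * (if real k < x\<^sup>2 then 1 else 0) / sqrt (real k))
      = (\<Sum>k\<in>K. if real k < x\<^sup>2 then \<bar>x\<bar> * (1 / sqrt (real k)) else 0)"
    by (intro sum.cong) auto
  also have "\<dots> = \<bar>x\<bar> * (\<Sum>k\<in>{k\<in>K. real k < x\<^sup>2}. 1 / sqrt (real k))"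
    using assms(1) by (auto simp: sum.inter_filter sum_distrib_left intro!: sum.cong)
  also have "\<dots> \<le> \<bar>x\<bar> * (2 * sqrt (x\<^sup>2))"
    using assms(2) by (intro mult_left_mono sum_inverse_sqrt_less_le) (auto intro: gr0I)
  also have "\<dots> = 2 * x\<^sup>2"
    by (simp add: power2_eq_square)
  finally show ?thesis .
qed

lemma sum_if_Suc_less_le:
  fixes y :: real
  assumes "0 \<le> y"
  shows "(\<Sum>n<N. if real (Suc n) < y then 1 else 0) \<le> min (real N) y"
  by (induction N) (use assms in auto)

lemma integral_comp_eq_if_distr_eq:
  fixes X Y :: "'a \<Rightarrow> real" and g :: "real \<Rightarrow> real"
  assumes "distr M borel X = distr M borel Y" "X \<in> borel_measurable M" "Y \<in> borel_measurable M"
    and "g \<in> borel_measurable borel"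
  shows "(\<integral>\<omega>. g (X \<omega>) \<partial>M) = (\<integral>\<omega>. g (Y \<omega>) \<partial>M)"
  using assms by (metis integral_distr)

lemma measure_eq_if_distr_eq:
  fixes X Y :: "'a \<Rightarrow> real"
  assumes "distr M borel X = distr M borel Y" "X \<in> borel_measurable M" "Y \<in> borel_measurable M"
    and "S \<in> sets borel"
  shows "measure M (X -` S \<inter> space M) = measure M (Y -` S \<inter> space M)"
  using assms by (metis measure_distr)

context prob_space
begin

lemma sum_prob_gt_le_expectation:
  fixes Y :: "'a \<Rightarrow> real"
  assumes Y: "integrable M Y" "\<And>\<omega>. \<omega> \<in> space M \<Longrightarrow> 0 \<le> Y \<omega>"
  shows "(\<Sum>n<N. prob {\<omega>\<in>space M. real (Suc n) < Y \<omega>}) \<le> expectation Y"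
proof -
  have [measurable]: "Y \<in> borel_measurable M"
    using Y(1) by simp
  have "(\<Sum>n<N. prob {\<omega>\<in>space M. real (Suc n) < Y \<omega>})
      = (\<Sum>n<N. expectation (indicator {\<omega>\<in>space M. real (Suc n) < Y \<omega>}))"
    by (simp add: Int_absorb2)
  also have "\<dots> = expectation (\<lambda>\<omega>. \<Sum>n<N. indicator {\<omega>\<in>space M. real (Suc n) < Y \<omega>} \<omega>)"
    by (subst Bochner_Integration.integral_sum)
      (auto intro!: integrable_real_indicator simp: emeasure_finite less_top[symmetric])
  also have "\<dots> \<le> expectation Y"
  proof (rule integral_mono)
    fix \<omega> assume \<omega>: "\<omega> \<in> space M"
    then have "(\<Sum>n<N. indicator {\<omega>\<in>space M. real (Suc n) < Y \<omega>} \<omega>)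
        = (\<Sum>n<N. if real (Suc n) < Y \<omega> then 1 else 0 :: real)"
      by (intro sum.cong) (auto simp: indicator_def)
    also have "\<dots> \<le> min (real N) (Y \<omega>)"
      using Y(2)[OF \<omega>] by (rule sum_if_Suc_less_le)
    also have "\<dots> \<le> Y \<omega>"
      by simp
    finally show "(\<Sum>n<N. indicator {\<omega>\<in>space M. real (Suc n) < Y \<omega>} \<omega>) \<le> Y \<omega>" .
  qed (auto intro!: integrable_real_indicator Y(1) simp: emeasure_finite less_top[symmetric])
  finally show ?thesis .
qed

lemma AE_eventually_sq_le:
  fixes X :: "nat \<Rightarrow> 'a \<Rightarrow> real"
  assumes meas: "\<And>k. k \<ge> 1 \<Longrightarrow> X k \<in> borel_measurable M"
    and distr: "\<And>k. k \<ge> 1 \<Longrightarrow> distr M borel (X k) = distr M borel (X 1)"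
    and sq: "integrable M (\<lambda>\<omega>. (X 1 \<omega>)\<^sup>2)"
  shows "AE \<omega> in M. \<forall>\<^sub>F k in sequentially. (X k \<omega>)\<^sup>2 \<le> real k"
proof -
  define S where "S n = {x :: real. real (Suc n) < x\<^sup>2}" for n
  define B where "B n = X (Suc n) -` S n \<inter> space M" for n
  have S_sets: "S n \<in> sets borel" for n
    unfolding S_def by measurable
  have B_sets: "B n \<in> events" for n
    unfolding B_def using meas[of "Suc n"] S_sets by (simp add: measurable_sets)
  have "measure M (B n) = prob {\<omega>\<in>space M. real (Suc n) < (X 1 \<omega>)\<^sup>2}" for n
  proof -
    have "measure M (B n) = measure M (X 1 -` S n \<inter> space M)"
      unfolding B_def by (rule measure_eq_if_distr_eq[OF distr meas meas S_sets]) simp_all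
    also have "X 1 -` S n \<inter> space M = {\<omega>\<in>space M. real (Suc n) < (X 1 \<omega>)\<^sup>2}"
      by (auto simp: S_def)
    finally show ?thesis .
  qed
  then have "summable (\<lambda>n. measure M (B n))"
    using sum_prob_gt_le_expectation[OF sq] by (intro summableI_nonneg_bounded) auto
  then have "AE \<omega> in M. \<forall>\<^sub>F n in sequentially. \<omega> \<in> space M - B n"
    by (intro borel_cantelli_AE1) (auto simp: B_sets emeasure_finite less_top[symmetric])
  then show ?thesis
  proof (rule eventually_mono)
    fix \<omega> assume "\<forall>\<^sub>F n in sequentially. \<omega> \<in> space M - B n"
    then have "\<forall>\<^sub>F n in sequentially. (X (Suc n) \<omega>)\<^sup>2 \<le> real (Suc n)"
      by (rule eventually_mono) (auto simp: B_def S_def)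
    then show "\<forall>\<^sub>F k in sequentially. (X k \<omega>)\<^sup>2 \<le> real k"
      using eventually_sequentially_Suc[of "\<lambda>k. (X k \<omega>)\<^sup>2 \<le> real k"] by blast
  qed
qed

lemma integrable_truncated_abs:
  fixes X :: "'a \<Rightarrow> real"
  assumes X: "X \<in> borel_measurable M" "integrable M (\<lambda>\<omega>. (X \<omega>)\<^sup>2)" and "1 \<le> y"
  shows "integrable M (\<lambda>\<omega>. \<bar>X \<omega>\<bar> * (if y < (X \<omega>)\<^sup>2 then 1 else 0))"
proof (rule Bochner_Integration.integrable_bound[OF X(2)])
  have "\<bar>x\<bar> \<le> x\<^sup>2" if "y < x\<^sup>2" for x :: real
  proof -
    have "1 \<le> \<bar>x\<bar>"
      using that \<open>1 \<le> y\<close> abs_le_square_iff[of 1 x] by simp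
    then have "\<bar>x\<bar> * 1 \<le> \<bar>x\<bar> * \<bar>x\<bar>"
      by (intro mult_left_mono) auto
    then show ?thesis
      by (simp add: power2_eq_square abs_mult_self_eq)
  qed
  then show "AE \<omega> in M. norm (\<bar>X \<omega>\<bar> * (if y < (X \<omega>)\<^sup>2 then 1 else 0)) \<le> norm ((X \<omega>)\<^sup>2)"
    by auto
qed (use X(1) in measurable)

lemma sum_truncated_moment_le:
  fixes X :: "'a \<Rightarrow> real"
  assumes X: "X \<in> borel_measurable M" "integrable M (\<lambda>\<omega>. (X \<omega>)\<^sup>2)"
    and K: "finite K" "0 \<notin> K"
  shows "(\<Sum>k\<in>K. expectation (\<lambda>\<omega>. \<bar>X \<omega>\<bar> * (if real k < (X \<omega>)\<^sup>2 then 1 else 0)) / sqrt (real k))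
           \<le> 2 * expectation (\<lambda>\<omega>. (X \<omega>)\<^sup>2)"
proof -
  have int: "integrable M (\<lambda>\<omega>. \<bar>X \<omega>\<bar> * (if real k < (X \<omega>)\<^sup>2 then 1 else 0) / sqrt (real k))"
    if "k \<in> K" for k
    using that K(2) by (intro integrable_divide_zero integrable_truncated_abs[OF X]) (auto intro: gr0I)
  have "(\<Sum>k\<in>K. expectation (\<lambda>\<omega>. \<bar>X \<omega>\<bar> * (if real k < (X \<omega>)\<^sup>2 then 1 else 0)) / sqrt (real k))
      = expectation (\<lambda>\<omega>. \<Sum>k\<in>K. \<bar>X \<omega>\<bar> * (if real k < (X \<omega>)\<^sup>2 then 1 else 0) / sqrt (real k))"
    using int by (subst Bochner_Integration.integral_sum) auto
  also have "\<dots> \<le> expectation (\<lambda>\<omega>. 2 * (X \<omega>)\<^sup>2)"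
  proof (rule integral_mono)
    show "integrable M (\<lambda>\<omega>. \<Sum>k\<in>K. \<bar>X \<omega>\<bar> * (if real k < (X \<omega>)\<^sup>2 then 1 else 0) / sqrt (real k))"
      using int by (rule Bochner_Integration.integrable_sum)
    show "integrable M (\<lambda>\<omega>. 2 * (X \<omega>)\<^sup>2)"
      using X(2) by simp
    show "(\<Sum>k\<in>K. \<bar>X \<omega>\<bar> * (if real k < (X \<omega>)\<^sup>2 then 1 else 0) / sqrt (real k)) \<le> 2 * (X \<omega>)\<^sup>2"
      for \<omega>
      using K by (rule sum_truncated_abs_le)
  qed
  finally show ?thesis
    by simp
qed

lemma expectation_abs_if_le_truncated:
  fixes X Y :: "'a \<Rightarrow> real" and P :: "real \<Rightarrow> bool"
  assumes distr: "distr M borel X = distr M borel Y"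
    and [measurable]: "X \<in> borel_measurable M" "Y \<in> borel_measurable M"
    and sq: "integrable M (\<lambda>\<omega>. (Y \<omega>)\<^sup>2)" and "1 \<le> y"
    and [measurable]: "Measurable.pred borel P" and P: "\<And>x. P x \<Longrightarrow> y < x\<^sup>2"
  shows "expectation (\<lambda>\<omega>. \<bar>X \<omega>\<bar> * (if P (X \<omega>) then 1 else 0))
           \<le> expectation (\<lambda>\<omega>. \<bar>Y \<omega>\<bar> * (if y < (Y \<omega>)\<^sup>2 then 1 else 0))"
proof -
  have int: "integrable M (\<lambda>\<omega>. \<bar>Y \<omega>\<bar> * (if y < (Y \<omega>)\<^sup>2 then 1 else 0))"
    using \<open>1 \<le> y\<close> by (intro integrable_truncated_abs sq) simp_all
  have "expectation (\<lambda>\<omega>. \<bar>X \<omega>\<bar> * (if P (X \<omega>) then 1 else 0))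
      = expectation (\<lambda>\<omega>. \<bar>Y \<omega>\<bar> * (if P (Y \<omega>) then 1 else 0))"
    using distr by (rule integral_comp_eq_if_distr_eq) measurable
  also have "\<dots> \<le> expectation (\<lambda>\<omega>. \<bar>Y \<omega>\<bar> * (if y < (Y \<omega>)\<^sup>2 then 1 else 0))"
  proof (rule integral_mono[OF _ int])
    show "integrable M (\<lambda>\<omega>. \<bar>Y \<omega>\<bar> * (if P (Y \<omega>) then 1 else 0))"
      by (rule Bochner_Integration.integrable_bound[OF int]) (auto dest: P)
  qed (auto dest: P)
  finally show ?thesis .
qed

lemma sum_weighted_tail_expectation_le:
  fixes X :: "nat \<Rightarrow> 'a \<Rightarrow> real" and P :: "nat \<Rightarrow> real \<Rightarrow> bool"
  assumes meas: "\<And>k. k \<ge> 1 \<Longrightarrow> X k \<in> borel_measurable M"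
    and distr: "\<And>k. k \<ge> 1 \<Longrightarrow> distr M borel (X k) = distr M borel (X 1)"
    and sq: "integrable M (\<lambda>\<omega>. (X 1 \<omega>)\<^sup>2)"
    and K: "finite K" "0 \<notin> K"
    and w: "\<And>k. k \<in> K \<Longrightarrow> 0 \<le> w k \<and> w k \<le> C / sqrt (real k)" "0 \<le> C"
    and P: "\<And>k. Measurable.pred borel (P k)" "\<And>k x. k \<in> K \<Longrightarrow> P k x \<Longrightarrow> real k < x\<^sup>2"
  shows "(\<Sum>k\<in>K. w k * expectation (\<lambda>\<omega>. \<bar>X k \<omega>\<bar> * (if P k (X k \<omega>) then 1 else 0)))
           \<le> 2 * C * expectation (\<lambda>\<omega>. (X 1 \<omega>)\<^sup>2)"
proof -
  have X1: "X 1 \<in> borel_measurable M"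
    using meas by simp
  let ?T = "\<lambda>k. expectation (\<lambda>\<omega>. \<bar>X 1 \<omega>\<bar> * (if real k < (X 1 \<omega>)\<^sup>2 then 1 else 0))"
  have term_le: "w k * expectation (\<lambda>\<omega>. \<bar>X k \<omega>\<bar> * (if P k (X k \<omega>) then 1 else 0))
      \<le> C * (?T k / sqrt (real k))" if k: "k \<in> K" for k
  proof -
    have "k \<ge> 1"
      using k K(2) by (cases k) auto
    then have "expectation (\<lambda>\<omega>. \<bar>X k \<omega>\<bar> * (if P k (X k \<omega>) then 1 else 0)) \<le> ?T k"
      using P(2)[OF k] by (intro expectation_abs_if_le_truncated[OF distr meas X1 sq _ P(1)]) auto
    moreover have "0 \<le> expectation (\<lambda>\<omega>. \<bar>X k \<omega>\<bar> * (if P k (X k \<omega>) then 1 else 0))"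
      by (rule integral_nonneg_AE) simp
    ultimately have "w k * expectation (\<lambda>\<omega>. \<bar>X k \<omega>\<bar> * (if P k (X k \<omega>) then 1 else 0))
        \<le> C / sqrt (real k) * ?T k"
      using w(1)[OF k] by (intro mult_mono) auto
    then show ?thesis
      by simp
  qed
  have "(\<Sum>k\<in>K. w k * expectation (\<lambda>\<omega>. \<bar>X k \<omega>\<bar> * (if P k (X k \<omega>) then 1 else 0)))
      \<le> C * (\<Sum>k\<in>K. ?T k / sqrt (real k))"
    unfolding sum_distrib_left by (rule sum_mono) (rule term_le)
  also have "\<dots> \<le> C * (2 * expectation (\<lambda>\<omega>. (X 1 \<omega>)\<^sup>2))"
    using w(2) by (intro mult_left_mono sum_truncated_moment_le[OF X1 sq K])
  finally show ?thesis
    by simp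
qed

lemma sum_tail_A_event_expectation_le:
  fixes X :: "nat \<Rightarrow> 'a \<Rightarrow> real"
  assumes meas: "\<And>k. k \<ge> 1 \<Longrightarrow> X k \<in> borel_measurable M"
    and distr: "\<And>k. k \<ge> 1 \<Longrightarrow> distr M borel (X k) = distr M borel (X 1)"
    and sq: "integrable M (\<lambda>\<omega>. (X 1 \<omega>)\<^sup>2)"
    and "0 < s" "2 \<le> m" and small: "\<forall>k > m. \<forall>x. A_event a k \<rho> s x \<longrightarrow> real k < x\<^sup>2"
  shows "(\<Sum>n<N. let k = n + m + 1 in
            wgt a s k * expectation (\<lambda>\<omega>. \<bar>X k \<omega>\<bar> * (if A_event a k \<rho> s (X k \<omega>) then 1 else 0)))
           \<le> 2 * ln_powr_const a s * expectation (\<lambda>\<omega>. (X 1 \<omega>)\<^sup>2)"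
proof -
  let ?K = "(\<lambda>n. n + m + 1) ` {..<N}"
  have "(\<Sum>n<N. let k = n + m + 1 in
          wgt a s k * expectation (\<lambda>\<omega>. \<bar>X k \<omega>\<bar> * (if A_event a k \<rho> s (X k \<omega>) then 1 else 0)))
      = (\<Sum>k\<in>?K. wgt a s k * expectation (\<lambda>\<omega>. \<bar>X k \<omega>\<bar> * (if A_event a k \<rho> s (X k \<omega>) then 1 else 0)))"
    by (simp add: sum.reindex inj_on_def Let_def)
  also have "\<dots> \<le> 2 * ln_powr_const a s * expectation (\<lambda>\<omega>. (X 1 \<omega>)\<^sup>2)"
  proof (rule sum_weighted_tail_expectation_le[where X = X, OF meas distr sq])
    show "finite ?K" "0 \<notin> ?K" "0 \<le> ln_powr_const a s"
      by (auto simp: ln_powr_const_nonneg)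
    show "0 \<le> wgt a s k \<and> wgt a s k \<le> ln_powr_const a s / sqrt (real k)" if "k \<in> ?K" for k
      using that assms(4,5) by (auto simp: wgt_nonneg intro!: wgt_le)
    show "Measurable.pred borel (A_event a k \<rho> s)" for k
      unfolding A_event_def by measurable
    show "real k < x\<^sup>2" if "k \<in> ?K" "A_event a k \<rho> s x" for k x
      using that small[rule_format, of k x] by auto
  qed
  finally show ?thesis .
qed

lemma tail_expectation_sum_tendsto_zero:
  fixes X :: "nat \<Rightarrow> 'a \<Rightarrow> real"
  assumes meas: "\<And>k. k \<ge> 1 \<Longrightarrow> X k \<in> borel_measurable M"
    and distr: "\<And>k. k \<ge> 1 \<Longrightarrow> distr M borel (X k) = distr M borel (X 1)"
    and sq: "integrable M (\<lambda>\<omega>. (X 1 \<omega>)\<^sup>2)"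
    and "a > -1/2" "\<rho> > 0"
  shows "(\<forall>\<^sub>F s in at_right 0. summable (\<lambda>n. let k = n + Mfun s + 1 in
            wgt a s k * expectation (\<lambda>\<omega>. \<bar>X k \<omega>\<bar> * (if A_event a k \<rho> s (X k \<omega>) then 1 else 0))))
       \<and> ((\<lambda>s. f_alpha a s * (\<Sum>n. let k = n + Mfun s + 1 in
            wgt a s k * expectation (\<lambda>\<omega>. \<bar>X k \<omega>\<bar> * (if A_event a k \<rho> s (X k \<omega>) then 1 else 0))))
           \<longlongrightarrow> 0) (at_right 0)"
proof (rule summable_mult_suminf_tendsto_zero)
  let ?B = "\<lambda>s. 2 * ln_powr_const a s * expectation (\<lambda>\<omega>. (X 1 \<omega>)\<^sup>2)"
  show "\<forall>\<^sub>F s in at_right 0. (\<forall>n. 0 \<le> (let k = n + Mfun s + 1 in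
            wgt a s k * expectation (\<lambda>\<omega>. \<bar>X k \<omega>\<bar> * (if A_event a k \<rho> s (X k \<omega>) then 1 else 0))))
      \<and> (\<forall>N. (\<Sum>n<N. let k = n + Mfun s + 1 in
            wgt a s k * expectation (\<lambda>\<omega>. \<bar>X k \<omega>\<bar> * (if A_event a k \<rho> s (X k \<omega>) then 1 else 0))) \<le> ?B s)
      \<and> 0 \<le> f_alpha a s"
    using eventually_at_right_less[of "0::real"] eventually_Mfun_ge[of 2]
      eventually_f_alpha_nonneg[OF assms(4)] eventually_A_event_imp_sq_gt[OF assms(4,5)]
    by eventually_elim
      (use sum_tail_A_event_expectation_le[where X = X, OF meas distr sq] in
        \<open>auto simp: Let_def wgt_nonneg intro!: mult_nonneg_nonneg integral_nonneg_AE\<close>)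
  show "((\<lambda>s. f_alpha a s * ?B s) \<longlongrightarrow> 0) (at_right 0)"
    using tendsto_mult_left[OF tendsto_f_alpha_mult_zero[OF assms(4)], of "2 * expectation (\<lambda>\<omega>. (X 1 \<omega>)\<^sup>2)"]
    by (simp add: mult_ac)
qed

end

theorem lemma5p3:
  fixes M :: "'a measure" and \<eta> :: "nat \<Rightarrow> 'a \<Rightarrow> real" and \<alpha> \<rho> :: real
  assumes "prob_space M"
    and "\<And>k. k \<ge> 1 \<Longrightarrow> \<eta> k \<in> borel_measurable M"
    and "prob_space.indep_vars M (\<lambda>_. borel) \<eta> {1..}"
    and "\<And>k. k \<ge> 1 \<Longrightarrow> distr M borel (\<eta> k) = distr M borel (\<eta> 1)"
    and "integrable M (\<eta> 1)" and "(\<integral>x. \<eta> 1 x \<partial>M) = 0"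
    and "integrable M (\<lambda>x. (\<eta> 1 x)\<^sup>2)" and "(\<integral>x. (\<eta> 1 x)\<^sup>2 \<partial>M) = 1"
    and "\<alpha> > -1/2" and "\<rho> > 0"
  shows "(AE \<omega> in M.
            (\<forall>\<^sub>F s in at_right 0. summable (\<lambda>n. let k = n + Mfun s + 1 in
                 wgt \<alpha> s k * \<bar>\<eta> k \<omega>\<bar> * (if A_event \<alpha> k \<rho> s (\<eta> k \<omega>) then 1 else 0)))
          \<and> ((\<lambda>s. f_alpha \<alpha> s * (\<Sum>n. let k = n + Mfun s + 1 in
                 wgt \<alpha> s k * \<bar>\<eta> k \<omega>\<bar> * (if A_event \<alpha> k \<rho> s (\<eta> k \<omega>) then 1 else 0)))
               \<longlongrightarrow> 0) (at_right 0))
       \<and> (\<forall>\<^sub>F s in at_right 0. summable (\<lambda>n. let k = n + Mfun s + 1 in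
                 wgt \<alpha> s k * (\<integral>\<omega>. \<bar>\<eta> k \<omega>\<bar> * (if A_event \<alpha> k \<rho> s (\<eta> k \<omega>) then 1 else 0) \<partial>M)))
       \<and> ((\<lambda>s. f_alpha \<alpha> s * (\<Sum>n. let k = n + Mfun s + 1 in
                 wgt \<alpha> s k * (\<integral>\<omega>. \<bar>\<eta> k \<omega>\<bar> * (if A_event \<alpha> k \<rho> s (\<eta> k \<omega>) then 1 else 0) \<partial>M)))
           \<longlongrightarrow> 0) (at_right 0)"
proof -
  interpret prob_space M by fact
  have sq_le: "AE \<omega> in M. \<forall>\<^sub>F k in sequentially. (\<eta> k \<omega>)\<^sup>2 \<le> real k"
    using assms(2,4,7) by (rule AE_eventually_sq_le)
  show ?thesis
    by (intro conjI eventually_mono[OF sq_le tail_sum_tendsto_zero_if_sq_le[OF assms(9,10)]]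
        tail_expectation_sum_tendsto_zero[where X = \<eta>, OF assms(2,4,7,9,10)])
qed

end
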